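(* Let $\mathbb{F}$ be a field and let $m,n,r,d$ be integers with $m,n\ge2$, $d\ge1$ and $0<r<\min\{m,n\}$. Then $$\mathbb{F}[\lambda]^{m\times n}_{d,r}=\Big\{L(\lambda)R(\lambda): L\in\mathbb{F}[\lambda]^{m\times r},\ R\in\mathbb{F}[\lambda]^{r\times n},\ \deg(L_{*i})\le d,\ \deg(R_{i*})\le d,\ \deg(L_{*i})+\deg(R_{i*})\le d\ \text{for } i=1,\dots,r\Big\}.$$
   Context: $\mathbb{F}[\lambda]^{m\times n}_{d,r}$ is the set of $m\times n$ polynomial matrices over $\mathbb{F}$ of degree at most $d$ and normal rank (rank over $\mathbb{F}(\lambda)$) at most $r$. Degree of a polynomial vector: maximum degree of its entries, with $\deg 0=-\infty$. $L_{*i}$ is the $i$th column of $L$ and $R_{i*}$ the $i$th row of $R$. *)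

theory Defs
  imports "Jordan_Normal_Form.DL_Rank"
    "HOL-Computational_Algebra.Polynomial"
    "HOL-Computational_Algebra.Fraction_Field"
    "HOL-Library.Extended_Real"
begin

definition pdeg :: "'a::zero poly \<Rightarrow> ereal" where
  "pdeg p = (if p = 0 then -\<infinity> else ereal (real (degree p)))"

definition vdeg :: "'a::zero poly vec \<Rightarrow> ereal" where
  "vdeg v = (SUP i\<in>{..<dim_vec v}. pdeg (v $ i))"

definition mdeg :: "'a::zero poly mat \<Rightarrow> ereal" where
  "mdeg A = (SUP p\<in>{A $$ (i,j) | i j. i < dim_row A \<and> j < dim_col A}. pdeg p)"

definition normal_rank :: "'a::field poly mat \<Rightarrow> nat" where
  "normal_rank A = vec_space.rank (dim_row A) (map_mat to_fract A)"

definition poly_mats_dr :: "nat \<Rightarrow> nat \<Rightarrow> nat \<Rightarrow> nat \<Rightarrow> 'a::field poly mat set" where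
  "poly_mats_dr m n d r =
     {A. A \<in> carrier_mat m n \<and> mdeg A \<le> ereal (real d) \<and> normal_rank A \<le> r}"

end

theory Submission
  imports Defs
begin

text \<open>
  The inclusion \<open>\<supseteq>\<close> is degree and rank bookkeeping: every entry of \<open>L R\<close> is a sum of
  products \<open>L\<^sub>t\<^sub>i R\<^sub>i\<^sub>j\<close> of degree at most \<open>deg L\<^sub>*\<^sub>i + deg R\<^sub>i\<^sub>*\<close>, and
  \<open>rank (L R) \<le> rank L \<le> r\<close> over \<open>\<bbbF>(\<lambda>)\<close>.

  For \<open>\<subseteq>\<close>, replace the columns of \<open>A\<close> by a column reduced family generating the same
  \<open>\<bbbF>[\<lambda>]\<close>-module, i.e. one whose leading coefficient vectors are \<open>\<bbbF>\<close>-linearly independent.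
  It is obtained by repeatedly cancelling a dependency among the leading coefficient vectors,
  which lowers the total degree. A column reduced family \<open>h\<^sub>i\<close> has the predictable degree
  property \<open>deg (\<Sum> c\<^sub>i h\<^sub>i) = max (deg c\<^sub>i + deg h\<^sub>i)\<close>. Hence writing column \<open>j\<close> of \<open>A\<close> as
  \<open>\<Sum> c\<^sub>j\<^sub>i h\<^sub>i\<close> gives \<open>deg c\<^sub>j\<^sub>i + deg h\<^sub>i \<le> d\<close>, and the generators that occur are
  \<open>\<bbbF>[\<lambda>]\<close>-independent, so there are at most \<open>rank A \<le> r\<close> of them. They form \<open>L\<close> and the
  coefficients form \<open>R\<close>.
\<close>

lemma coeff_mult_degree_add:
  fixes p q :: "'a::idom poly"
  assumes "degree q \<le> e"
  shows "coeff (p * q) (degree p + e) = lead_coeff p * coeff q e"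
proof (cases "degree q = e")
  case True
  then show ?thesis using coeff_mult_degree_sum by metis
next
  case False
  with assms have "degree (p * q) < degree p + e" "degree q < e"
    using degree_mult_le[of p q] by linarith+
  then show ?thesis by (simp add: coeff_eq_0)
qed

section \<open>Column reduced families of polynomial vectors\<close>

text \<open>A column vector of length \<open>m\<close> is a function \<open>nat \<Rightarrow> 'a poly\<close> of which only the entries
  below \<open>m\<close> matter; families of vectors are indexed by finite sets. The zero vector has
  \<open>vec_degree\<close> 0 rather than \<open>-\<infinity>\<close>; \<open>vec_weight\<close> separates it from the constant vectors.\<close>

definition nonzero_on :: "nat \<Rightarrow> (nat \<Rightarrow> 'a::zero poly) \<Rightarrow> bool" where
  "nonzero_on m v \<longleftrightarrow> (\<exists>t<m. v t \<noteq> 0)"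

definition vec_degree :: "nat \<Rightarrow> (nat \<Rightarrow> 'a::zero poly) \<Rightarrow> nat" where
  "vec_degree m v = Max (insert 0 ((\<lambda>t. degree (v t)) ` {..<m}))"

definition lead_coeff_vec :: "nat \<Rightarrow> (nat \<Rightarrow> 'a::zero poly) \<Rightarrow> nat \<Rightarrow> 'a" where
  "lead_coeff_vec m v t = coeff (v t) (vec_degree m v)"

definition vec_weight :: "nat \<Rightarrow> (nat \<Rightarrow> 'a::zero poly) \<Rightarrow> nat" where
  "vec_weight m v = (if nonzero_on m v then Suc (vec_degree m v) else 0)"

definition poly_lincomb ::
  "'i set \<Rightarrow> ('i \<Rightarrow> 'a::comm_semiring_0 poly) \<Rightarrow> ('i \<Rightarrow> nat \<Rightarrow> 'a poly) \<Rightarrow> nat \<Rightarrow> 'a poly" where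
  "poly_lincomb I c f t = (\<Sum>i\<in>I. c i * f i t)"

definition poly_span :: "'i set \<Rightarrow> ('i \<Rightarrow> nat \<Rightarrow> 'a::comm_semiring_0 poly) \<Rightarrow> (nat \<Rightarrow> 'a poly) set" where
  "poly_span I f = range (\<lambda>c. poly_lincomb I c f)"

definition column_reduced :: "nat \<Rightarrow> 'i set \<Rightarrow> ('i \<Rightarrow> nat \<Rightarrow> 'a::comm_semiring_0 poly) \<Rightarrow> bool" where
  "column_reduced m I f \<longleftrightarrow> (\<forall>a. (\<forall>t<m. (\<Sum>i\<in>I. a i * lead_coeff_vec m (f i) t) = 0) \<longrightarrow>
     (\<forall>i\<in>I. nonzero_on m (f i) \<longrightarrow> a i = 0))"

lemma column_reducedD:
  assumes "column_reduced m I f" "\<forall>t<m. (\<Sum>i\<in>I. a i * lead_coeff_vec m (f i) t) = 0"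
    and "i \<in> I" "nonzero_on m (f i)"
  shows "a i = 0"
  using assms unfolding column_reduced_def by blast

lemma vec_degree_ge: "t < m \<Longrightarrow> degree (v t) \<le> vec_degree m v"
  unfolding vec_degree_def by (rule Max_ge) auto

lemma vec_degree_le_iff: "vec_degree m v \<le> k \<longleftrightarrow> (\<forall>t<m. degree (v t) \<le> k)"
  unfolding vec_degree_def by (subst Max_le_iff) auto

lemma lead_coeff_vec_eq_0: "\<not> nonzero_on m v \<Longrightarrow> t < m \<Longrightarrow> lead_coeff_vec m v t = 0"
  unfolding nonzero_on_def lead_coeff_vec_def by simp

lemma vec_weight_less:
  assumes deg: "\<forall>t<m. degree (v t) \<le> E" and top: "\<forall>t<m. coeff (v t) E = 0"
  shows "vec_weight m v < Suc E"
proof (cases "nonzero_on m v")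
  case True
  have below: "v t = 0 \<or> degree (v t) < E" if t: "t < m" for t
  proof (cases "v t = 0")
    case False
    then have "degree (v t) \<noteq> E" using top t by auto
    then show ?thesis using deg t by (simp add: le_neq_implies_less)
  qed simp
  obtain t0 where "t0 < m" "v t0 \<noteq> 0" using True unfolding nonzero_on_def by blast
  then have "0 < E" using below by fastforce
  moreover have "vec_degree m v \<le> E - 1"
    unfolding vec_degree_le_iff using below by fastforce
  ultimately show ?thesis using True unfolding vec_weight_def by simp
qed (simp add: vec_weight_def)

lemma in_poly_span_self:
  fixes f :: "'i \<Rightarrow> nat \<Rightarrow> 'a::comm_semiring_1 poly"
  assumes "finite I" "i \<in> I"
  shows "f i \<in> poly_span I f"
proof -
  have "f i t = poly_lincomb I (\<lambda>j. if j = i then 1 else 0) f t" for t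
  proof -
    have "poly_lincomb I (\<lambda>j. if j = i then 1 else 0) f t = (\<Sum>j\<in>I. if j = i then f j t else 0)"
      unfolding poly_lincomb_def by (rule sum.cong) auto
    then show ?thesis using assms by simp
  qed
  then have "f i = poly_lincomb I (\<lambda>j. if j = i then 1 else 0) f" ..
  then show ?thesis unfolding poly_span_def by blast
qed

lemma poly_span_subset:
  fixes f :: "'i \<Rightarrow> nat \<Rightarrow> 'a::comm_semiring_1 poly"
  assumes "\<forall>j\<in>J. g j \<in> poly_span I f"
  shows "poly_span J g \<subseteq> poly_span I f"
proof
  fix v assume "v \<in> poly_span J g"
  then obtain c where v: "v = poly_lincomb J c g" unfolding poly_span_def by blast
  have "\<forall>j\<in>J. \<exists>x. g j = poly_lincomb I x f" using assms unfolding poly_span_def by blast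
  then obtain x where x: "\<forall>j\<in>J. g j = poly_lincomb I (x j) f"
    by (rule bchoice[THEN exE])
  have "v = poly_lincomb I (\<lambda>i. \<Sum>j\<in>J. c j * x j i) f"
  proof
    fix t
    have "v t = (\<Sum>j\<in>J. c j * g j t)" by (simp add: v poly_lincomb_def)
    also have "\<dots> = (\<Sum>j\<in>J. \<Sum>i\<in>I. c j * x j i * f i t)"
      using x by (simp add: poly_lincomb_def sum_distrib_left mult.assoc)
    also have "\<dots> = poly_lincomb I (\<lambda>i. \<Sum>j\<in>J. c j * x j i) f t"
      unfolding poly_lincomb_def sum_distrib_right by (rule sum.swap)
    finally show "v t = poly_lincomb I (\<lambda>i. \<Sum>j\<in>J. c j * x j i) f t" .
  qed
  then show "v \<in> poly_span I f" unfolding poly_span_def by blast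
qed

lemma poly_span_exchange:
  fixes f :: "'i \<Rightarrow> nat \<Rightarrow> 'a::comm_ring_1 poly"
  assumes I: "finite I" and k: "k \<in> I" and ck: "c k = 1"
  shows "poly_span I (f(k := poly_lincomb I c f)) = poly_span I f"
    (is "poly_span I ?g = _")
proof
  have "?g j \<in> poly_span I f" if "j \<in> I" for j
    using in_poly_span_self[OF I that] by (cases "j = k") (auto simp: poly_span_def)
  then show "poly_span I ?g \<subseteq> poly_span I f" by (rule poly_span_subset[rule_format])
  have "f k = poly_lincomb I (\<lambda>i. if i = k then 1 else - c i) ?g"
  proof
    fix t
    let ?rest = "\<Sum>i\<in>I - {k}. c i * f i t"
    have "poly_lincomb I (\<lambda>i. if i = k then 1 else - c i) ?g t = ?g k t + (\<Sum>i\<in>I - {k}. - c i * f i t)"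
      unfolding poly_lincomb_def sum.remove[OF I k] by (intro arg_cong2[where f = "(+)"] sum.cong) auto
    also have "\<dots> = (f k t + ?rest) - ?rest"
      unfolding poly_lincomb_def sum.remove[OF I k] by (simp add: ck sum_negf)
    finally show "f k t = poly_lincomb I (\<lambda>i. if i = k then 1 else - c i) ?g t" by simp
  qed
  then have "f i \<in> poly_span I ?g" if "i \<in> I" for i
    using in_poly_span_self[OF I that, of ?g] unfolding poly_span_def
    by (cases "i = k") (auto simp: range_eqI)
  then show "poly_span I f \<subseteq> poly_span I ?g" by (intro poly_span_subset ballI)
qed

lemma degree_poly_lincomb_le:
  fixes f :: "'i \<Rightarrow> nat \<Rightarrow> 'a::idom poly"
  assumes "finite I" and "t < m"
    and bound: "\<And>i. i \<in> I \<Longrightarrow> c i \<noteq> 0 \<Longrightarrow> nonzero_on m (f i) \<Longrightarrow>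
                  degree (c i) + vec_degree m (f i) \<le> D"
  shows "degree (poly_lincomb I c f t) \<le> D"
  unfolding poly_lincomb_def
proof (rule degree_sum_le)
  fix i assume i: "i \<in> I"
  show "degree (c i * f i t) \<le> D"
  proof (cases "c i = 0 \<or> f i t = 0")
    case False
    then have "nonzero_on m (f i)" using \<open>t < m\<close> unfolding nonzero_on_def by blast
    then show ?thesis
      using bound[OF i] False degree_mult_le[of "c i" "f i t"] vec_degree_ge[OF \<open>t < m\<close>, of "f i"]
      by fastforce
  qed auto
qed (rule \<open>finite I\<close>)

lemma coeff_poly_lincomb_top:
  fixes f :: "'i \<Rightarrow> nat \<Rightarrow> 'a::idom poly"
  assumes t: "t < m"
    and bound: "\<And>i. i \<in> I \<Longrightarrow> c i \<noteq> 0 \<Longrightarrow> nonzero_on m (f i) \<Longrightarrow>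
                  degree (c i) + vec_degree m (f i) \<le> D"
  shows "coeff (poly_lincomb I c f t) D =
    (\<Sum>i\<in>I. (if nonzero_on m (f i) \<and> c i \<noteq> 0 \<and> degree (c i) + vec_degree m (f i) = D
             then lead_coeff (c i) else 0) * lead_coeff_vec m (f i) t)"
  unfolding poly_lincomb_def coeff_sum
proof (rule sum.cong[OF refl])
  fix i assume i: "i \<in> I"
  show "coeff (c i * f i t) D =
    (if nonzero_on m (f i) \<and> c i \<noteq> 0 \<and> degree (c i) + vec_degree m (f i) = D
     then lead_coeff (c i) else 0) * lead_coeff_vec m (f i) t"
  proof (cases "c i = 0 \<or> f i t = 0")
    case True
    then show ?thesis by (auto simp: lead_coeff_vec_def)
  next
    case False
    then have nz: "nonzero_on m (f i)" using t unfolding nonzero_on_def by blast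
    have dg: "degree (f i t) \<le> vec_degree m (f i)" using vec_degree_ge[OF t] .
    show ?thesis
    proof (cases "degree (c i) + vec_degree m (f i) = D")
      case True
      then show ?thesis
        using coeff_mult_degree_add[OF dg, of "c i"] nz False by (simp add: lead_coeff_vec_def)
    next
      case False
      then have "degree (c i * f i t) < D"
        using bound[OF i _ nz] \<open>\<not> (c i = 0 \<or> f i t = 0)\<close> degree_mult_le[of "c i" "f i t"] dg
        by fastforce
      then show ?thesis using False by (simp add: coeff_eq_0)
    qed
  qed
qed

text \<open>If the leading coefficient vectors are dependent, cancelling their combination in the
  top degree yields a member of the span of strictly smaller weight.\<close>

lemma column_reduction_step:
  fixes f :: "'i \<Rightarrow> nat \<Rightarrow> 'a::field poly"
  assumes I: "finite I" and not_reduced: "\<not> column_reduced m I f"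
  obtains k c where "k \<in> I" "c k = 1" "vec_weight m (poly_lincomb I c f) < vec_weight m (f k)"
proof -
  obtain a where a: "\<forall>t<m. (\<Sum>i\<in>I. a i * lead_coeff_vec m (f i) t) = 0"
    and a_nz: "\<exists>i\<in>I. nonzero_on m (f i) \<and> a i \<noteq> 0"
    using not_reduced unfolding column_reduced_def by blast
  define J where "J = {i\<in>I. nonzero_on m (f i) \<and> a i \<noteq> 0}"
  define E where "E = Max ((\<lambda>i. vec_degree m (f i)) ` J)"
  have J: "finite J" "J \<noteq> {}" using I a_nz unfolding J_def by auto
  have E_ge: "vec_degree m (f i) \<le> E" if "i \<in> J" for i
    unfolding E_def using J that by simp
  have "E \<in> (\<lambda>i. vec_degree m (f i)) ` J" unfolding E_def using J by (intro Max_in) auto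
  then obtain k where k: "k \<in> J" "vec_degree m (f k) = E" by blast
  define c where "c i = (if i \<in> J then monom (a i / a k) (E - vec_degree m (f i)) else 0)" for i
  have c_nz: "c i \<noteq> 0 \<longleftrightarrow> i \<in> J" for i
    using k(1) unfolding c_def J_def by auto
  have c_J: "nonzero_on m (f i) \<and> c i \<noteq> 0 \<and> degree (c i) + vec_degree m (f i) = E \<and>
      lead_coeff (c i) = a i / a k" if "i \<in> J" for i
    using that k(1) E_ge[OF that] unfolding c_def J_def by (simp add: degree_monom_eq)
  have bound: "degree (c i) + vec_degree m (f i) \<le> E"
    if "i \<in> I" "c i \<noteq> 0" "nonzero_on m (f i)" for i
    using c_J c_nz that by simp
  have "coeff (poly_lincomb I c f t) E = 0" if t: "t < m" for t
  proof -
    have "coeff (poly_lincomb I c f t) E =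
        (\<Sum>i\<in>I. (if nonzero_on m (f i) \<and> c i \<noteq> 0 \<and> degree (c i) + vec_degree m (f i) = E
                 then lead_coeff (c i) else 0) * lead_coeff_vec m (f i) t)"
      by (rule coeff_poly_lincomb_top[OF t bound])
    also have "\<dots> = (\<Sum>i\<in>I. (if i \<in> J then a i / a k else 0) * lead_coeff_vec m (f i) t)"
      by (intro sum.cong refl) (auto simp: c_nz dest: c_J)
    also have "\<dots> = (\<Sum>i\<in>I. a i * lead_coeff_vec m (f i) t) / a k"
      unfolding sum_divide_distrib
      by (intro sum.cong refl) (auto simp: J_def lead_coeff_vec_eq_0[OF _ t])
    finally show ?thesis using a t by simp
  qed
  then have "vec_weight m (poly_lincomb I c f) < Suc E"
    by (intro vec_weight_less allI impI degree_poly_lincomb_le[OF I _ bound])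
  also have "Suc E = vec_weight m (f k)" using k unfolding vec_weight_def J_def by simp
  finally have weight: "vec_weight m (poly_lincomb I c f) < vec_weight m (f k)" .
  show ?thesis
  proof (rule that)
    show "k \<in> I" using k(1) unfolding J_def by simp
    show "c k = 1" using k unfolding c_def J_def by simp
  qed (rule weight)
qed

lemma ex_column_reduced_generators:
  fixes f :: "'i \<Rightarrow> nat \<Rightarrow> 'a::field poly"
  assumes I: "finite I"
  shows "\<exists>g. poly_span I g = poly_span I f \<and> column_reduced m I g"
proof (induction "\<Sum>i\<in>I. vec_weight m (f i)" arbitrary: f rule: less_induct)
  case less
  show ?case
  proof (cases "column_reduced m I f")
    case False
    then obtain k c where k: "k \<in> I" "c k = 1"
      and lt: "vec_weight m (poly_lincomb I c f) < vec_weight m (f k)"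
      using column_reduction_step[OF I] by blast
    let ?f' = "f(k := poly_lincomb I c f)"
    have "(\<Sum>i\<in>I. vec_weight m (?f' i)) < (\<Sum>i\<in>I. vec_weight m (f i))"
      using lt I k(1) by (simp add: sum.remove[of I k])
    then obtain g where "poly_span I g = poly_span I ?f'" "column_reduced m I g"
      using less by blast
    then show ?thesis using poly_span_exchange[where c = c and f = f, OF I k] by auto
  qed blast
qed

lemma predictable_degree:
  fixes f :: "'i \<Rightarrow> nat \<Rightarrow> 'a::field poly"
  assumes I: "finite I" and red: "column_reduced m I f"
    and i: "i \<in> I" "nonzero_on m (f i)" "c i \<noteq> 0"
  shows "nonzero_on m (poly_lincomb I c f)"
    and "degree (c i) + vec_degree m (f i) \<le> vec_degree m (poly_lincomb I c f)"
proof -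
  define S where "S = {j\<in>I. nonzero_on m (f j) \<and> c j \<noteq> 0}"
  define D where "D = Max ((\<lambda>j. degree (c j) + vec_degree m (f j)) ` S)"
  have S: "finite S" "i \<in> S" using I i unfolding S_def by auto
  have bound: "degree (c j) + vec_degree m (f j) \<le> D" if "j \<in> I" "c j \<noteq> 0" "nonzero_on m (f j)" for j
    unfolding D_def using S that by (intro Max_ge) (auto simp: S_def)
  have "D \<in> (\<lambda>j. degree (c j) + vec_degree m (f j)) ` S" unfolding D_def using S by (intro Max_in) auto
  then obtain j where j: "j \<in> S" "degree (c j) + vec_degree m (f j) = D" by blast
  let ?a = "\<lambda>j. if nonzero_on m (f j) \<and> c j \<noteq> 0 \<and> degree (c j) + vec_degree m (f j) = D
               then lead_coeff (c j) else 0"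
  have "\<exists>t<m. (\<Sum>j\<in>I. ?a j * lead_coeff_vec m (f j) t) \<noteq> 0"
  proof (rule ccontr)
    assume "\<not> ?thesis"
    then have "?a j = 0" using column_reducedD[OF red, of ?a j] j(1) unfolding S_def by auto
    then show False using j unfolding S_def by auto
  qed
  then obtain t where t: "t < m" "(\<Sum>j\<in>I. ?a j * lead_coeff_vec m (f j) t) \<noteq> 0"
    by blast
  then have top: "coeff (poly_lincomb I c f t) D \<noteq> 0"
    using coeff_poly_lincomb_top[where I = I and c = c and f = f, OF t(1) bound] by simp
  then show "nonzero_on m (poly_lincomb I c f)"
    using t(1) unfolding nonzero_on_def by auto
  have "D \<le> vec_degree m (poly_lincomb I c f)"
    using le_degree[OF top] vec_degree_ge[OF t(1)] by (rule order_trans)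
  then show "degree (c i) + vec_degree m (f i) \<le> vec_degree m (poly_lincomb I c f)"
    using bound[OF i(1,3,2)] by simp
qed

lemma column_reduced_reindex:
  assumes I: "finite I" and red: "column_reduced m I f"
    and inj: "inj_on \<pi> K" and sub: "\<pi> ` K \<subseteq> I"
  shows "column_reduced m K (f \<circ> \<pi>)"
  unfolding column_reduced_def
proof (intro allI impI ballI)
  fix a k
  assume sum_0: "\<forall>t<m. (\<Sum>k\<in>K. a k * lead_coeff_vec m ((f \<circ> \<pi>) k) t) = 0"
    and k: "k \<in> K" and nz: "nonzero_on m ((f \<circ> \<pi>) k)"
  define a' where "a' i = (if i \<in> \<pi> ` K then a (the_inv_into K \<pi> i) else 0)" for i
  have "(\<Sum>i\<in>I. a' i * lead_coeff_vec m (f i) t) = (\<Sum>k\<in>K. a k * lead_coeff_vec m ((f \<circ> \<pi>) k) t)" for t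
  proof -
    have "(\<Sum>i\<in>I. a' i * lead_coeff_vec m (f i) t) = (\<Sum>i\<in>\<pi> ` K. a' i * lead_coeff_vec m (f i) t)"
      using I sub by (intro sum.mono_neutral_right) (auto simp: a'_def)
    also have "\<dots> = (\<Sum>k\<in>K. a' (\<pi> k) * lead_coeff_vec m (f (\<pi> k)) t)"
      using inj by (simp add: sum.reindex)
    also have "\<dots> = (\<Sum>k\<in>K. a k * lead_coeff_vec m ((f \<circ> \<pi>) k) t)"
      using inj by (intro sum.cong refl) (simp add: a'_def the_inv_into_f_f)
    finally show ?thesis .
  qed
  then have "a' (\<pi> k) = 0"
    using column_reducedD[OF red, of a' "\<pi> k"] sum_0 k sub nz by auto
  then show "a k = 0" using inj k by (simp add: a'_def the_inv_into_f_f)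
qed

lemma column_reduced_lincomb_eq_0:
  fixes f :: "'i \<Rightarrow> nat \<Rightarrow> 'a::field poly"
  assumes "finite I" "column_reduced m I f" "\<forall>i\<in>I. nonzero_on m (f i)"
    and "\<forall>t<m. poly_lincomb I c f t = 0"
  shows "\<forall>i\<in>I. c i = 0"
  using predictable_degree(1)[OF assms(1,2)] assms(3,4) unfolding nonzero_on_def by blast

section \<open>Normal rank\<close>

lemma (in vec_space) rank_mult_le:
  assumes A: "A \<in> carrier_mat n nc" and X: "X \<in> carrier_mat nc k"
  shows "rank (A * X) \<le> rank A"
proof -
  define W where "W = span (set (cols A))"
  have AX: "A * X \<in> carrier_mat n k" using A X by auto
  have cols_W: "set (cols (A * X)) \<subseteq> W"
  proof
    fix x assume "x \<in> set (cols (A * X))"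
    then obtain j where j: "j < k" "x = col (A * X) j" using AX
      by (metis cols_length cols_nth carrier_matD(2) in_set_conv_nth)
    have "x = A *\<^sub>v col X j" using j A X by auto
    moreover have "col X j \<in> carrier_vec nc" using X by auto
    ultimately show "x \<in> W" unfolding W_def using col_space_eq[OF A, folded col_space_def] A
      unfolding col_space_def by auto
  qed
  have W: "VectorSpace.subspace class_ring W V"
    unfolding W_def using A cols_dim span_is_subspace by (metis carrier_matD(1))
  then have "span (set (cols (A * X))) \<subseteq> W"
    using cols_W span_is_subset by (simp add: VectorSpace.subspace_def)
  moreover have span_AX: "VectorSpace.subspace class_ring (span (set (cols (A * X)))) V"
    by (metis AX cols_dim carrier_matD(1) span_is_subspace)
  ultimately have subspace: "VectorSpace.subspace class_ring (span (set (cols (A * X)))) (vs W)"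
    using nested_subspaces[OF W span_AX] by auto
  have fin_W: "vectorspace.fin_dim class_ring (vs W)" unfolding W_def using A fin_dim_span_cols by auto
  have "vectorspace.fin_dim class_ring (span_vs (set (cols (A * X))))" using AX fin_dim_span_cols by blast
  then show ?thesis unfolding rank_def
    using vectorspace.subspace_dim[OF subspace_is_vs[OF W] subspace fin_W] unfolding W_def by auto
qed

lemma (in vec_space) rank_eq_dim_col_if_kernel_trivial:
  assumes A: "A \<in> carrier_mat n nc"
    and ker: "\<And>v :: 'a vec. v \<in> carrier_vec nc \<Longrightarrow> A *\<^sub>v v = 0\<^sub>v n \<Longrightarrow> v = 0\<^sub>v nc"
  shows "rank A = nc"
proof -
  have dist: "distinct (cols A)"
  proof (rule ccontr)
    assume "\<not> distinct (cols A)"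
    then obtain i j where ij: "i < nc" "j < nc" "i \<noteq> j" "col A i = col A j"
      using A by (auto simp: distinct_conv_nth)
    define v :: "'a vec" where "v = unit_vec nc i - unit_vec nc j"
    have v: "v \<in> carrier_vec nc" unfolding v_def by simp
    have "A *\<^sub>v v = 0\<^sub>v n"
    proof (rule eq_vecI)
      fix t assume "t < dim_vec (0\<^sub>v n :: 'a vec)"
      then have t: "t < n" by simp
      have "(A *\<^sub>v v) $ t = A $$ (t, i) - A $$ (t, j)"
        unfolding v_def using A t ij by (simp add: scalar_prod_minus_distrib[of _ nc])
      also have "\<dots> = 0" by (metis A carrier_matD(1,2) index_col ij(1,2,4) t right_minus_eq)
      finally show "(A *\<^sub>v v) $ t = 0\<^sub>v n $ t" using t by simp
    qed (use A in simp)
    moreover have "v $ i = 1" unfolding v_def using ij by simp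
    ultimately show False using ker[OF v] ij(1) by auto
  qed
  have "lin_indpt (set (cols A))"
  proof
    assume "lin_dep (set (cols A))"
    then obtain v where "v \<in> carrier_vec nc" "v \<noteq> 0\<^sub>v nc" "A *\<^sub>v v = 0\<^sub>v n"
      using lin_depE[OF A _ dist] by blast
    then show False using ker by blast
  qed
  then show ?thesis using lin_indpt_full_rank[OF A dist] by blast
qed

text \<open>Clearing denominators: a kernel vector over the fraction field, scaled by the product
  of the denominators of its entries, is a kernel vector over the domain.\<close>

lemma to_fract_kernel_trivial:
  fixes B :: "'a::idom mat"
  assumes B: "B \<in> carrier_mat nr nc"
    and ker: "\<And>w. w \<in> carrier_vec nc \<Longrightarrow> B *\<^sub>v w = 0\<^sub>v nr \<Longrightarrow> w = 0\<^sub>v nc"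
    and v: "v \<in> carrier_vec nc" and Bv: "map_mat to_fract B *\<^sub>v v = 0\<^sub>v nr"
  shows "v = 0\<^sub>v nc"
proof (rule ccontr)
  let ?h = "to_fract :: 'a \<Rightarrow> 'a fract"
  interpret inj_comm_ring_hom ?h by unfold_locales auto
  assume "v \<noteq> 0\<^sub>v nc"
  then obtain i where i: "i < nc" "v $ i \<noteq> 0" using v by (auto simp: vec_eq_iff)
  have "\<forall>i. \<exists>a b. v $ i = Fract a b \<and> b \<noteq> 0" using Fract_cases by metis
  then obtain a b where vi: "\<And>i. v $ i = Fract (a i) (b i)" and b: "\<And>i. b i \<noteq> 0" by metis
  define d where "d = (\<Prod>j<nc. b j)"
  have d: "d \<noteq> 0" unfolding d_def using b by simp
  have "\<exists>c. ?h d * v $ j = ?h c" if j: "j < nc" for j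
  proof -
    have "b j dvd d" unfolding d_def using j by (intro dvd_prodI) auto
    then obtain e where "d = b j * e" ..
    then have "?h d * v $ j = ?h (a j * e)" unfolding vi using b[of j]
      by (simp add: eq_fract to_fract_def)
    then show ?thesis ..
  qed
  then obtain c where c: "\<And>j. j < nc \<Longrightarrow> ?h d * v $ j = ?h (c j)" by metis
  define w where "w = vec nc c"
  have w: "w \<in> carrier_vec nc" unfolding w_def by simp
  have dvw: "?h d \<cdot>\<^sub>v v = map_vec ?h w" unfolding w_def using c v by (intro eq_vecI) auto
  have "w $ i \<noteq> 0" using d i c[OF i(1)] unfolding w_def by auto
  with i w have "w \<noteq> 0\<^sub>v nc" by auto
  moreover have "map_vec ?h (B *\<^sub>v w) = 0\<^sub>v nr"
  proof -
    have "map_vec ?h (B *\<^sub>v w) = map_mat ?h B *\<^sub>v (?h d \<cdot>\<^sub>v v)"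
      unfolding dvw mult_mat_vec_hom[OF B w] ..
    also have "\<dots> = ?h d \<cdot>\<^sub>v (map_mat ?h B *\<^sub>v v)" using B v by auto
    also have "\<dots> = 0\<^sub>v nr" unfolding Bv by (intro eq_vecI) auto
    finally show ?thesis .
  qed
  then have "B *\<^sub>v w = 0\<^sub>v nr" by simp
  ultimately show False using ker[OF w] by blast
qed

lemma map_mat_to_fract_mult:
  fixes A :: "'a::idom mat"
  assumes "A \<in> carrier_mat nr n" "B \<in> carrier_mat n nc"
  shows "map_mat to_fract (A * B) = map_mat to_fract A * map_mat to_fract B"
proof -
  interpret inj_comm_ring_hom "to_fract :: 'a \<Rightarrow> 'a fract" by unfold_locales auto
  show ?thesis using mat_hom_mult[OF assms] .
qed

lemma normal_rank_mult_le:
  assumes "A \<in> carrier_mat m k" "B \<in> carrier_mat k n"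
  shows "normal_rank (A * B) \<le> normal_rank A"
  using assms vec_space.rank_mult_le[of "map_mat to_fract A" m k "map_mat to_fract B" n]
  by (simp add: normal_rank_def map_mat_to_fract_mult)

lemma normal_rank_le_dim_col: "normal_rank A \<le> dim_col A"
  unfolding normal_rank_def by (rule vec_space.rank_le_nc) auto

lemma normal_rank_eq_dim_col_if_kernel_trivial:
  fixes B :: "'a::field poly mat"
  assumes B: "B \<in> carrier_mat m s"
    and ker: "\<And>w. w \<in> carrier_vec s \<Longrightarrow> B *\<^sub>v w = 0\<^sub>v m \<Longrightarrow> w = 0\<^sub>v s"
  shows "normal_rank B = s"
  unfolding normal_rank_def using B
  by (intro vec_space.rank_eq_dim_col_if_kernel_trivial to_fract_kernel_trivial[OF B ker]) auto


section \<open>Products of bounded degree\<close>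

lemma pdeg_le_iff: "pdeg p \<le> ereal (real k) \<longleftrightarrow> degree p \<le> k"
  unfolding pdeg_def by auto

lemma pdeg_mult:
  fixes p q :: "'a::idom poly"
  shows "pdeg (p * q) = pdeg p + pdeg q"
  unfolding pdeg_def by (simp add: degree_mult_eq)

lemma pdeg_le_vdeg: "i < dim_vec v \<Longrightarrow> pdeg (v $ i) \<le> vdeg v"
  unfolding vdeg_def by (rule SUP_upper) auto

lemma vdeg_le_iff: "vdeg v \<le> ereal (real k) \<longleftrightarrow> (\<forall>i<dim_vec v. degree (v $ i) \<le> k)"
  unfolding vdeg_def SUP_le_iff by (auto simp: pdeg_le_iff)

lemma mdeg_le_iff:
  "mdeg A \<le> ereal (real k) \<longleftrightarrow> (\<forall>i<dim_row A. \<forall>j<dim_col A. degree (A $$ (i, j)) \<le> k)"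
  unfolding mdeg_def SUP_le_iff by (auto simp: pdeg_le_iff)

lemma vdeg_bounds_of_degree_split:
  assumes "e \<le> d" "\<forall>t<dim_vec u. degree (u $ t) \<le> e" "\<forall>j<dim_vec v. degree (v $ j) \<le> d - e"
  shows "vdeg u \<le> ereal (real d) \<and> vdeg v \<le> ereal (real d) \<and> vdeg u + vdeg v \<le> ereal (real d)"
proof -
  have u: "vdeg u \<le> ereal (real e)" and v: "vdeg v \<le> ereal (real (d - e))"
    using assms(2,3) by (simp_all add: vdeg_le_iff)
  have "vdeg u + vdeg v \<le> ereal (real e) + ereal (real (d - e))" using u v by (rule add_mono)
  also have "\<dots> = ereal (real d)" using assms(1) by simp
  finally show ?thesis using u v assms(1) by (auto elim: order_trans)
qed

lemma mult_mem_poly_mats_dr: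
  fixes L :: "'a::field poly mat"
  assumes L: "L \<in> carrier_mat m r" and R: "R \<in> carrier_mat r n"
    and deg: "\<forall>i<r. vdeg (col L i) + vdeg (row R i) \<le> ereal (real d)"
  shows "L * R \<in> poly_mats_dr m n d r"
proof -
  have "degree ((L * R) $$ (t, j)) \<le> d" if t: "t < m" and j: "j < n" for t j
  proof -
    have "degree (\<Sum>k<r. L $$ (t, k) * R $$ (k, j)) \<le> d"
    proof (rule degree_sum_le)
      fix k assume k: "k \<in> {..<r}"
      have "pdeg (L $$ (t, k) * R $$ (k, j)) \<le> vdeg (col L k) + vdeg (row R k)"
        unfolding pdeg_mult using pdeg_le_vdeg[of t "col L k"] pdeg_le_vdeg[of j "row R k"] L R t j k
        by (intro add_mono) auto
      then show "degree (L $$ (t, k) * R $$ (k, j)) \<le> d"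
        using deg k unfolding pdeg_le_iff[symmetric] by (auto elim: order_trans)
    qed simp
    then show ?thesis using L R t j by (simp add: scalar_prod_def atLeast0LessThan)
  qed
  moreover have "normal_rank (L * R) \<le> r"
    using normal_rank_mult_le[OF L R] normal_rank_le_dim_col[of L] L by simp
  ultimately show ?thesis using L R unfolding poly_mats_dr_def mdeg_le_iff by auto
qed

section \<open>Factorization\<close>

lemma column_reduced_card_le_normal_rank:
  fixes A :: "'a::field poly mat"
  assumes A: "A \<in> carrier_mat m n"
    and red: "column_reduced m {..<s} f" and nz: "\<forall>k<s. nonzero_on m (f k)"
    and span: "\<forall>k<s. f k \<in> poly_span {..<n} (\<lambda>j t. A $$ (t, j))"
  shows "s \<le> normal_rank A"
proof -
  have "\<forall>k\<in>{..<s}. \<exists>x. f k = poly_lincomb {..<n} x (\<lambda>j t. A $$ (t, j))"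
    using span unfolding poly_span_def by auto
  then obtain x where x: "\<forall>k\<in>{..<s}. f k = poly_lincomb {..<n} (x k) (\<lambda>j t. A $$ (t, j))"
    by (rule bchoice[THEN exE])
  define B where "B = mat m s (\<lambda>(t, k). f k t)"
  define X where "X = mat n s (\<lambda>(j, k). x k j)"
  have B: "B \<in> carrier_mat m s" and X: "X \<in> carrier_mat n s" unfolding B_def X_def by auto
  have "B = A * X"
  proof (rule eq_matI)
    fix t k assume "t < dim_row (A * X)" "k < dim_col (A * X)"
    then have t: "t < m" and k: "k < s" using A X by auto
    have "(A * X) $$ (t, k) = (\<Sum>j<n. x k j * A $$ (t, j))"
      using A X t k by (simp add: scalar_prod_def atLeast0LessThan X_def mult.commute)
    also have "\<dots> = f k t" using x k by (simp add: poly_lincomb_def)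
    finally show "B $$ (t, k) = (A * X) $$ (t, k)" using t k by (simp add: B_def)
  qed (use A X in \<open>auto simp: B_def\<close>)
  moreover have "normal_rank B = s"
  proof (rule normal_rank_eq_dim_col_if_kernel_trivial[OF B])
    fix w assume w: "w \<in> carrier_vec s" and Bw: "B *\<^sub>v w = 0\<^sub>v m"
    have "poly_lincomb {..<s} (\<lambda>k. w $ k) f t = (B *\<^sub>v w) $ t" if "t < m" for t
      using that w by (simp add: B_def poly_lincomb_def scalar_prod_def atLeast0LessThan mult.commute)
    then have "\<forall>k<s. w $ k = 0"
      using column_reduced_lincomb_eq_0[OF _ red, of "\<lambda>k. w $ k"] nz Bw by simp
    then show "w = 0\<^sub>v s" using w by (intro eq_vecI) auto
  qed
  ultimately show ?thesis using normal_rank_mult_le[OF A X] by simp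
qed

lemma column_reduced_expansion:
  fixes A :: "'a::field poly mat"
  assumes A: "A \<in> carrier_mat m n" and deg: "\<forall>t<m. \<forall>j<n. degree (A $$ (t, j)) \<le> d"
  obtains s h b where "s \<le> normal_rank A"
    and "\<And>t j. t < m \<Longrightarrow> j < n \<Longrightarrow> A $$ (t, j) = (\<Sum>k<s. h k t * b k j)"
    and "\<And>k. k < s \<Longrightarrow> vec_degree m (h k) \<le> d"
    and "\<And>k j. k < s \<Longrightarrow> j < n \<Longrightarrow> b k j \<noteq> 0 \<Longrightarrow> vec_degree m (h k) + degree (b k j) \<le> d"
proof -
  let ?a = "\<lambda>j t. A $$ (t, j)"
  obtain g where span: "poly_span {..<n} g = poly_span {..<n} ?a" and red: "column_reduced m {..<n} g"
    using ex_column_reduced_generators[of "{..<n}" ?a m] by blast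
  have "\<forall>j\<in>{..<n}. \<exists>c. ?a j = poly_lincomb {..<n} c g"
    using in_poly_span_self[of "{..<n}" _ ?a] span unfolding poly_span_def by auto
  then obtain c where c: "\<forall>j\<in>{..<n}. ?a j = poly_lincomb {..<n} (c j) g"
    by (rule bchoice[THEN exE])
  have c_deg: "degree (c j i) + vec_degree m (g i) \<le> d"
    if "j < n" "i < n" "nonzero_on m (g i)" "c j i \<noteq> 0" for j i
  proof -
    have "degree (c j i) + vec_degree m (g i) \<le> vec_degree m (?a j)"
      using predictable_degree(2)[of "{..<n}" m g i "c j"] red that c by simp
    also have "\<dots> \<le> d" using deg that(1) by (simp add: vec_degree_le_iff)
    finally show ?thesis .
  qed
  define U where "U = {i\<in>{..<n}. nonzero_on m (g i) \<and> (\<exists>j<n. c j i \<noteq> 0)}"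
  obtain \<pi> where \<pi>: "bij_betw \<pi> {..<card U} U"
    using ex_bij_betw_nat_finite[of U] unfolding U_def atLeast0LessThan by auto
  have \<pi>_U: "\<pi> k \<in> U" if "k < card U" for k using \<pi> that by (auto dest: bij_betwE)
  show ?thesis
  proof
    have "column_reduced m {..<card U} (g \<circ> \<pi>)"
      using \<pi> by (intro column_reduced_reindex[OF _ red]) (auto simp: bij_betw_def U_def)
    moreover have "g i \<in> poly_span {..<n} ?a" if "i < n" for i
      using in_poly_span_self[of "{..<n}" i g] that span by simp
    ultimately show "card U \<le> normal_rank A"
      using \<pi>_U by (intro column_reduced_card_le_normal_rank[OF A]) (auto simp: U_def)
  next
    fix t j assume t: "t < m" and j: "j < n"
    have "?a j = poly_lincomb {..<n} (c j) g" using c j by simp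
    then have "A $$ (t, j) = (\<Sum>i<n. c j i * g i t)"
      using fun_cong[of "?a j" _ t] by (simp add: poly_lincomb_def)
    also have "\<dots> = (\<Sum>i\<in>U. c j i * g i t)"
      using t j by (intro sum.mono_neutral_right) (auto simp: U_def nonzero_on_def)
    also have "\<dots> = (\<Sum>k<card U. g (\<pi> k) t * c j (\<pi> k))"
      using \<pi> by (simp add: sum.reindex_bij_betw[symmetric] mult.commute)
    finally show "A $$ (t, j) = (\<Sum>k<card U. g (\<pi> k) t * c j (\<pi> k))" .
  next
    fix k assume "k < card U"
    then obtain j where "j < n" "\<pi> k < n" "nonzero_on m (g (\<pi> k))" "c j (\<pi> k) \<noteq> 0"
      using \<pi>_U unfolding U_def by blast
    then show "vec_degree m (g (\<pi> k)) \<le> d" using c_deg by fastforce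
  next
    fix k j assume "k < card U" "j < n" "c j (\<pi> k) \<noteq> 0"
    then show "vec_degree m (g (\<pi> k)) + degree (c j (\<pi> k)) \<le> d"
      using c_deg \<pi>_U unfolding U_def by fastforce
  qed
qed

lemma poly_mats_dr_factorization:
  fixes A :: "'a::field poly mat"
  assumes "A \<in> poly_mats_dr m n d r"
  obtains L R where "A = L * R" "L \<in> carrier_mat m r" "R \<in> carrier_mat r n"
    "\<forall>i<r. vdeg (col L i) \<le> ereal (real d) \<and> vdeg (row R i) \<le> ereal (real d) \<and>
           vdeg (col L i) + vdeg (row R i) \<le> ereal (real d)"
proof -
  have A: "A \<in> carrier_mat m n" and deg: "\<forall>t<m. \<forall>j<n. degree (A $$ (t, j)) \<le> d"
    and rk: "normal_rank A \<le> r"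
    using assms unfolding poly_mats_dr_def mdeg_le_iff by auto
  obtain s h b where s: "s \<le> normal_rank A"
    and expand: "\<And>t j. t < m \<Longrightarrow> j < n \<Longrightarrow> A $$ (t, j) = (\<Sum>k<s. h k t * b k j)"
    and h_deg: "\<And>k. k < s \<Longrightarrow> vec_degree m (h k) \<le> d"
    and b_deg: "\<And>k j. k < s \<Longrightarrow> j < n \<Longrightarrow> b k j \<noteq> 0 \<Longrightarrow> vec_degree m (h k) + degree (b k j) \<le> d"
    using column_reduced_expansion[OF A deg] by blast
  define L where "L = mat m r (\<lambda>(t, k). if k < s then h k t else 0)"
  define R where "R = mat r n (\<lambda>(k, j). if k < s then b k j else 0)"
  have L: "L \<in> carrier_mat m r" and R: "R \<in> carrier_mat r n" unfolding L_def R_def by auto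
  have "A = L * R"
  proof (rule eq_matI)
    fix t j assume "t < dim_row (L * R)" "j < dim_col (L * R)"
    then have t: "t < m" and j: "j < n" using L R by auto
    have "(L * R) $$ (t, j) = (\<Sum>k<r. L $$ (t, k) * R $$ (k, j))"
      using L R t j by (simp add: scalar_prod_def atLeast0LessThan)
    also have "\<dots> = (\<Sum>k<s. h k t * b k j)"
      using s rk t j by (intro sum.mono_neutral_cong_right) (auto simp: L_def R_def)
    finally show "A $$ (t, j) = (L * R) $$ (t, j)" using expand[OF t j] by simp
  qed (use A L R in auto)
  moreover have "vdeg (col L k) \<le> ereal (real d) \<and> vdeg (row R k) \<le> ereal (real d) \<and>
      vdeg (col L k) + vdeg (row R k) \<le> ereal (real d)" if k: "k < r" for k
  proof (cases "k < s")
    case True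
    have "degree (b k j) \<le> d - vec_degree m (h k)" if "j < n" for j
      using b_deg[OF True that] by (cases "b k j = 0") auto
    then show ?thesis
      using h_deg[OF True] vec_degree_ge[of _ m "h k"] True k
      by (intro vdeg_bounds_of_degree_split) (auto simp: L_def R_def)
  next
    case False
    then show ?thesis using k by (intro vdeg_bounds_of_degree_split[of 0]) (auto simp: L_def R_def)
  qed
  ultimately show ?thesis using that L R by blast
qed

theorem theorem4p1:
  fixes m n r d :: nat
  assumes "m \<ge> 2" and "n \<ge> 2" and "d \<ge> 1" and "0 < r" and "r < min m n"
  shows "(poly_mats_dr m n d r :: 'a::field poly mat set) =
    {L * R | L R. L \<in> carrier_mat m r \<and> R \<in> carrier_mat r n \<and>
       (\<forall>i<r. vdeg (col L i) \<le> ereal (real d) \<and> vdeg (row R i) \<le> ereal (real d) \<and>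
              vdeg (col L i) + vdeg (row R i) \<le> ereal (real d))}"
proof (intro equalityI subsetI)
  fix A :: "'a poly mat"
  assume "A \<in> poly_mats_dr m n d r"
  then obtain L R where "A = L * R" "L \<in> carrier_mat m r" "R \<in> carrier_mat r n"
    "\<forall>i<r. vdeg (col L i) \<le> ereal (real d) \<and> vdeg (row R i) \<le> ereal (real d) \<and>
           vdeg (col L i) + vdeg (row R i) \<le> ereal (real d)"
    by (rule poly_mats_dr_factorization)
  then show "A \<in> {L * R | L R. L \<in> carrier_mat m r \<and> R \<in> carrier_mat r n \<and>
       (\<forall>i<r. vdeg (col L i) \<le> ereal (real d) \<and> vdeg (row R i) \<le> ereal (real d) \<and>
              vdeg (col L i) + vdeg (row R i) \<le> ereal (real d))}" by blast
qed (auto intro: mult_mem_poly_mats_dr)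

end
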